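(* Let $n_x\ge1$, $t\ge 0$, and let $\bm{M}_0,\dots,\bm{M}_t$ and $\widehat{\bm{Q}}$ be $n_x\times n_x$ symmetric positive definite matrices such that the ellipsoid $\widehat{\mathcal{E}}=\mathcal{E}(\bm{0},\widehat{\bm{Q}})$ contains the Minkowski sum $\mathcal{X}=\mathcal{E}(\bm{0},\bm{M}_0)+\cdots+\mathcal{E}(\bm{0},\bm{M}_t)$. Let $\delta_{\mathrm{H}}$ be the Hausdorff distance between $\mathcal{X}$ and $\widehat{\mathcal{E}}$, which equals $$\delta_{\mathrm{H}}=\sup_{\bm{s}\in\mathcal{S}^{n_x-1}}\left(\big\|\widehat{\bm{Q}}^{1/2}\bm{s}\big\|_2-\sum_{k=0}^{t}\big\|\bm{M}_k^{1/2}\bm{s}\big\|_2\right).$$ Then $$\delta_{\mathrm{H}}\leq\Big\|\widehat{\bm{Q}}^{1/2}-\sum_{k=0}^{t}\bm{M}_k^{1/2}\Big\|_2,$$ where $\|\cdot\|_2$ on matrices denotes the spectral (operator 2-) norm.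
   Context: $\mathcal{E}(\bm{0},\bm{Q})=\{\bm{x}\in\mathbb{R}^{n_x}:\bm{x}^\top\bm{Q}^{-1}\bm{x}\le1\}$ for symmetric positive definite $\bm{Q}$. $\mathcal{S}^{n_x-1}$ is the Euclidean unit sphere in $\mathbb{R}^{n_x}$, and $\bm{A}^{1/2}$ is the symmetric positive definite square root. The Hausdorff distance is $\max\{\sup_{\bm{x}\in\mathcal{X}}\inf_{\bm{y}\in\widehat{\mathcal{E}}}\|\bm{x}-\bm{y}\|_2,\ \sup_{\bm{y}\in\widehat{\mathcal{E}}}\inf_{\bm{x}\in\mathcal{X}}\|\bm{x}-\bm{y}\|_2\}$. In the paper, $\mathcal{X}$ is the reach set at time $t$ of the linear system $\bm{x}(t+1)=\bm{F}\bm{x}(t)+\bm{G}\bm{u}(t)$ with ellipsoidal initial-condition and control sets centered at the origin, with $\bm{M}_t=\bm{F}^t\bm{Q}_0(\bm{F}^\top)^t$ and $\bm{M}_k=\bm{F}^{t-k-1}\bm{G}\bm{U}\bm{G}^\top(\bm{F}^\top)^{t-k-1}$ for $k<t$, and $\widehat{\bm{Q}}$ is the shape matrix of an outer ellipsoidal approximation of it. *)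

theory Defs
  imports "HOL-Analysis.Analysis"
begin

definition sym_pos_def :: "real^'n^'n \<Rightarrow> bool" where
  "sym_pos_def A \<longleftrightarrow> transpose A = A \<and> (\<forall>x. x \<noteq> 0 \<longrightarrow> x \<bullet> (A *v x) > 0)"

definition msqrt :: "real^'n^'n \<Rightarrow> real^'n^'n" where
  "msqrt A = (THE S. sym_pos_def S \<and> S ** S = A)"

definition ellipsoid0 :: "real^'n^'n \<Rightarrow> (real^'n) set" where
  "ellipsoid0 Q = {x. x \<bullet> (matrix_inv Q *v x) \<le> 1}"

definition ellipsoid_msum :: "(nat \<Rightarrow> real^'n^'n) \<Rightarrow> nat \<Rightarrow> (real^'n) set" where
  "ellipsoid_msum M t = {(\<Sum>k\<le>t. x k) | x. \<forall>k\<le>t. x k \<in> ellipsoid0 (M k)}"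

definition hausdorff_dist :: "'a::metric_space set \<Rightarrow> 'a set \<Rightarrow> real" where
  "hausdorff_dist X Y = max (SUP x\<in>X. infdist x Y) (SUP y\<in>Y. infdist y X)"

definition spec_norm :: "real^'n^'m \<Rightarrow> real" where
  "spec_norm A = onorm (\<lambda>x. A *v x)"

end

theory Submission
  imports Defs
begin

(* A point of the outer ellipsoid is Qh^(1/2) u with |u| <= 1, and then the sum of the
   M_k^(1/2) u is a point of the Minkowski sum at distance at most
   |(Qh^(1/2) - sum_k M_k^(1/2)) u| <= |Qh^(1/2) - sum_k M_k^(1/2)|.  The other half of the
   Hausdorff distance vanishes because the sum lies inside the ellipsoid.  Existence and
   uniqueness of the positive definite square roots (msqrt is defined by THE) come from the
   spectral theorem for symmetric matrices, obtained by maximising the Rayleigh quotient on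
   invariant subspaces. *)

lemma symmetric_matrix_inner:
  fixes A :: "real^'n^'n"
  assumes "transpose A = A"
  shows "x \<bullet> (A *v y) = (A *v x) \<bullet> y"
  by (metis assms dot_lmul_matrix inner_commute transpose_matrix_vector)

lemma nonneg_quadratic_linear_coeff_zero:
  fixes a c :: real
  assumes "\<And>t. 0 \<le> t * a + t\<^sup>2 * c"
  shows "a = 0"
proof (rule ccontr)
  assume "a \<noteq> 0"
  define s where "s = 1 / (\<bar>c\<bar> + 1)"
  have s: "0 < s" "s * c < 1"
    unfolding s_def by (auto simp: field_simps abs_if)
  have "0 \<le> (- s * a) * a + (- s * a)\<^sup>2 * c" by (rule assms)
  also have "\<dots> = s * a\<^sup>2 * (s * c - 1)" by (simp add: power2_eq_square algebra_simps)
  also have "\<dots> < 0"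
    using s \<open>a \<noteq> 0\<close> by (intro mult_pos_neg) auto
  finally show False by simp
qed

lemma quadratic_form_le_on_subspace:
  fixes A :: "real^'n^'n"
  assumes V: "subspace V" and bound: "\<forall>y\<in>V \<inter> sphere 0 1. y \<bullet> (A *v y) \<le> l"
    and x: "x \<in> V"
  shows "x \<bullet> (A *v x) \<le> l * (x \<bullet> x)"
proof (cases "x = 0")
  case False
  let ?y = "(1 / norm x) *\<^sub>R x"
  have "?y \<in> V \<inter> sphere 0 1" using V x False by (simp add: subspace_scale)
  hence "?y \<bullet> (A *v ?y) \<le> l" using bound by blast
  hence "(x \<bullet> (A *v x)) / (norm x)\<^sup>2 \<le> l"
    by (simp add: matrix_vector_mult_scaleR power2_eq_square)
  thus ?thesis using False by (simp add: power2_norm_eq_inner field_simps)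
qed simp

lemma rayleigh_maximizer_eigenvector:
  fixes A :: "real^'n^'n"
  assumes symA: "transpose A = A" and V: "subspace V" and invariant: "\<forall>x\<in>V. A *v x \<in> V"
    and v: "v \<in> V" "norm v = 1"
    and maximal: "\<forall>y\<in>V \<inter> sphere 0 1. y \<bullet> (A *v y) \<le> v \<bullet> (A *v v)"
  shows "A *v v = (v \<bullet> (A *v v)) *\<^sub>R v"
proof -
  define l where "l = v \<bullet> (A *v v)"
  define w where "w = l *\<^sub>R v - A *v v"
  have vv: "v \<bullet> v = 1" using v(2) by (simp add: dot_square_norm)
  have wV: "w \<in> V" unfolding w_def using V v invariant by (simp add: subspace_diff subspace_scale)
  txt \<open>The form \<open>x \<mapsto> l |x|\<^sup>2 - x \<bullet> A x\<close> is nonnegative on \<open>V\<close> and vanishes at \<open>v\<close>,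
    so its derivative at \<open>v\<close> in the direction \<open>w \<in> V\<close>, namely \<open>2 |w|\<^sup>2\<close>, vanishes.\<close>
  have "0 \<le> t * (2 * (w \<bullet> w)) + t\<^sup>2 * (l * (w \<bullet> w) - w \<bullet> (A *v w))" for t
  proof -
    have "v + t *\<^sub>R w \<in> V" using V v wV by (simp add: subspace_add subspace_scale)
    hence "(v + t *\<^sub>R w) \<bullet> (A *v (v + t *\<^sub>R w)) \<le> l * ((v + t *\<^sub>R w) \<bullet> (v + t *\<^sub>R w))"
      using quadratic_form_le_on_subspace[OF V] maximal unfolding l_def by blast
    moreover have "v \<bullet> (A *v (A *v v)) = (A *v v) \<bullet> (A *v v)"
      by (rule symmetric_matrix_inner[OF symA])
    ultimately show ?thesis
      unfolding w_def using vv l_def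
      by (simp add: power2_eq_square algebra_simps inner_add_left inner_add_right
          inner_diff_left inner_diff_right matrix_vector_right_distrib
          matrix_vector_mult_scaleR inner_commute)
  qed
  hence "2 * (w \<bullet> w) = 0" by (rule nonneg_quadratic_linear_coeff_zero)
  thus ?thesis unfolding w_def l_def by simp
qed

lemma symmetric_matrix_eigenvector_in_subspace:
  fixes A :: "real^'n^'n"
  assumes symA: "transpose A = A" and V: "subspace V" and invariant: "\<forall>x\<in>V. A *v x \<in> V"
    and nontrivial: "x0 \<in> V" "x0 \<noteq> 0"
  obtains v l where "v \<in> V" "norm v = 1" "A *v v = l *\<^sub>R v"
proof -
  let ?K = "V \<inter> sphere 0 1"
  have "(1 / norm x0) *\<^sub>R x0 \<in> ?K" using V nontrivial by (simp add: subspace_scale)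
  hence "?K \<noteq> {}" by blast
  moreover have "compact ?K"
    using closed_subspace[OF V] compact_sphere by (metis compact_Int_closed inf_commute)
  moreover have "continuous_on ?K (\<lambda>x. x \<bullet> (A *v x))" by (intro continuous_intros)
  ultimately obtain v where v: "v \<in> ?K" and "\<forall>y\<in>?K. y \<bullet> (A *v y) \<le> v \<bullet> (A *v v)"
    using continuous_attains_sup by blast
  with rayleigh_maximizer_eigenvector[OF symA V invariant] that show ?thesis by auto
qed

lemma symmetric_matrix_orthonormal_eigenbasis_subspace:
  fixes A :: "real^'n^'n"
  assumes symA: "transpose A = A" and "subspace V" and "\<forall>x\<in>V. A *v x \<in> V"
  shows "\<exists>B. finite B \<and> B \<subseteq> V \<and> pairwise orthogonal B
      \<and> (\<forall>v\<in>B. norm v = 1 \<and> (\<exists>l. A *v v = l *\<^sub>R v))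
      \<and> (\<forall>x\<in>V. x = (\<Sum>v\<in>B. (x \<bullet> v) *\<^sub>R v))"
  using assms(2,3)
proof (induction "dim V" arbitrary: V rule: less_induct)
  case less
  show ?case
  proof (cases "V \<subseteq> {0}")
    case True
    then show ?thesis by (intro exI[of _ "{}"]) auto
  next
    case False
    then obtain x0 where "x0 \<in> V" "x0 \<noteq> 0" by auto
    then obtain v l where v: "v \<in> V" "norm v = 1" and eig: "A *v v = l *\<^sub>R v"
      using symmetric_matrix_eigenvector_in_subspace[OF symA less.prems] by blast
    have vv: "v \<bullet> v = 1" using v(2) by (simp add: dot_square_norm)
    define W where "W = {x\<in>V. x \<bullet> v = 0}"
    have W: "subspace W" using less.prems(1) unfolding W_def subspace_def
      by (auto simp: inner_add_left)
    have "\<forall>x\<in>W. A *v x \<in> W"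
      using less.prems(2) eig symmetric_matrix_inner[OF symA] unfolding W_def
      by (auto simp: inner_commute)
    moreover have "v \<notin> W" using vv unfolding W_def by simp
    hence "W \<subset> V" using v(1) unfolding W_def by blast
    hence "dim W < dim V" using dim_psubset span_eq_iff less.prems(1) W by metis
    ultimately obtain B where B: "finite B" "B \<subseteq> W" "pairwise orthogonal B"
      "\<forall>u\<in>B. norm u = 1 \<and> (\<exists>l. A *v u = l *\<^sub>R u)" "\<forall>x\<in>W. x = (\<Sum>u\<in>B. (x \<bullet> u) *\<^sub>R u)"
      using less.hyps[OF _ W] by blast
    have Bv: "u \<bullet> v = 0" if "u \<in> B" for u using B(2) that unfolding W_def by auto
    have "v \<notin> B" using \<open>v \<notin> W\<close> B(2) by blast
    have "x = (\<Sum>u\<in>insert v B. (x \<bullet> u) *\<^sub>R u)" if x: "x \<in> V" for x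
    proof -
      define x' where "x' = x - (x \<bullet> v) *\<^sub>R v"
      have "x' \<in> W" unfolding W_def x'_def using x v less.prems(1) vv
        by (simp add: subspace_diff subspace_scale inner_diff_left)
      hence "x' = (\<Sum>u\<in>B. (x' \<bullet> u) *\<^sub>R u)" using B(5) by blast
      also have "\<dots> = (\<Sum>u\<in>B. (x \<bullet> u) *\<^sub>R u)"
        by (rule sum.cong) (auto simp: x'_def inner_diff_left Bv inner_commute[of v])
      finally show ?thesis using B(1) \<open>v \<notin> B\<close> unfolding x'_def by (simp add: algebra_simps)
    qed
    moreover have "pairwise orthogonal (insert v B)"
      using B(3) Bv by (auto simp: pairwise_insert orthogonal_def inner_commute)
    ultimately show ?thesis
      using B v eig unfolding W_def by (intro exI[of _ "insert v B"]) auto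
  qed
qed

lemma symmetric_matrix_orthonormal_eigenbasis:
  fixes A :: "real^'n^'n"
  assumes "transpose A = A"
  obtains B where "finite B" "pairwise orthogonal B" "\<forall>v\<in>B. norm v = 1"
    "\<forall>v\<in>B. \<exists>l. A *v v = l *\<^sub>R v" "\<forall>x. x = (\<Sum>v\<in>B. (x \<bullet> v) *\<^sub>R v)"
  using symmetric_matrix_orthonormal_eigenbasis_subspace[OF assms subspace_UNIV] by auto

lemma orthonormal_sum_inner:
  fixes B :: "'a::real_inner set"
  assumes "finite B" "pairwise orthogonal B" "\<forall>v\<in>B. norm v = 1" "w \<in> B"
  shows "(\<Sum>v\<in>B. c v *\<^sub>R v) \<bullet> w = c w"
proof -
  have "(\<Sum>v\<in>B. c v *\<^sub>R v) \<bullet> w = (\<Sum>v\<in>B. c v * (v \<bullet> w))" by (simp add: inner_sum_left)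
  also have "\<dots> = c w * (w \<bullet> w)"
    using assms(2,4) by (subst sum.remove[OF assms(1,4)]) (auto simp: pairwise_def orthogonal_def)
  also have "w \<bullet> w = 1" using assms(3,4) by (simp add: dot_square_norm)
  finally show ?thesis by simp
qed

lemma outer_product_sum_mult:
  fixes B :: "(real^'n) set"
  shows "(\<chi> i j. \<Sum>v\<in>B. f v * v$i * v$j) *v x = (\<Sum>v\<in>B. (f v * (v \<bullet> x)) *\<^sub>R v)"
    (is "?L = ?R")
proof -
  have "?L $ i = ?R $ i" for i
  proof -
    have "?L $ i = (\<Sum>j\<in>UNIV. \<Sum>v\<in>B. f v * v$i * (v$j * x$j))"
      by (simp add: matrix_vector_mult_def sum_distrib_right mult.assoc)
    also have "\<dots> = (\<Sum>v\<in>B. f v * v$i * (v \<bullet> x))"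
      by (subst sum.swap) (simp add: inner_vec_def sum_distrib_left)
    also have "\<dots> = ?R $ i"
      by (simp add: sum_component mult.commute mult.left_commute)
    finally show ?thesis .
  qed
  thus ?thesis by (simp add: vec_eq_iff)
qed

lemma sym_pos_sqrt_exists:
  fixes A :: "real^'n^'n"
  assumes "sym_pos_def A"
  shows "\<exists>S. sym_pos_def S \<and> S ** S = A"
proof -
  have symA: "transpose A = A" and pd: "\<And>x. x \<noteq> 0 \<Longrightarrow> x \<bullet> (A *v x) > 0"
    using assms unfolding sym_pos_def_def by auto
  obtain B where B: "finite B" "pairwise orthogonal B" "\<forall>v\<in>B. norm v = 1"
      "\<forall>v\<in>B. \<exists>l. A *v v = l *\<^sub>R v" and expand: "\<forall>x. x = (\<Sum>v\<in>B. (x \<bullet> v) *\<^sub>R v)"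
    using symmetric_matrix_orthonormal_eigenbasis[OF symA] by blast
  define l where "l v = v \<bullet> (A *v v)" for v
  have eig: "A *v v = l v *\<^sub>R v" and lpos: "l v > 0" if v: "v \<in> B" for v
  proof -
    obtain c where c: "A *v v = c *\<^sub>R v" using B(4) v by blast
    have "v \<bullet> v = 1" using B(3) v by (simp add: dot_square_norm)
    thus "A *v v = l v *\<^sub>R v" unfolding l_def c by simp
    show "l v > 0" unfolding l_def using B(3) v by (intro pd) auto
  qed
  define S :: "real^'n^'n" where "S = (\<chi> i j. \<Sum>v\<in>B. sqrt (l v) * v$i * v$j)"
  have Sx: "S *v x = (\<Sum>v\<in>B. (sqrt (l v) * (v \<bullet> x)) *\<^sub>R v)" for x
    unfolding S_def by (rule outer_product_sum_mult)
  have "(S ** S) *v x = A *v x" for x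
  proof -
    have "(S *v x) \<bullet> v = sqrt (l v) * (v \<bullet> x)" "(A *v x) \<bullet> v = l v * (v \<bullet> x)" if "v \<in> B" for v
      using orthonormal_sum_inner[OF B(1-3) that] eig[OF that]
        symmetric_matrix_inner[OF symA, of x v] unfolding Sx by (auto simp: inner_commute)
    hence "sqrt (l v) * (v \<bullet> (S *v x)) = (A *v x) \<bullet> v" if "v \<in> B" for v
      using lpos[OF that] that by (simp add: inner_commute)
    hence "S *v (S *v x) = (\<Sum>v\<in>B. ((A *v x) \<bullet> v) *\<^sub>R v)" unfolding Sx[of "S *v x"] by simp
    thus ?thesis using expand[rule_format, of "A *v x"] by (simp add: matrix_vector_mul_assoc)
  qed
  moreover have "transpose S = S"
    unfolding S_def transpose_def by (simp add: vec_eq_iff mult_ac)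
  moreover have "x \<bullet> (S *v x) > 0" if "x \<noteq> 0" for x
  proof -
    obtain v where v: "v \<in> B" "v \<bullet> x \<noteq> 0"
      using expand[rule_format, of x] \<open>x \<noteq> 0\<close>
      by (metis (no_types, lifting) inner_commute scale_eq_0_iff sum.neutral)
    have "x \<bullet> (S *v x) = (\<Sum>v\<in>B. sqrt (l v) * (v \<bullet> x)\<^sup>2)"
      unfolding Sx by (simp add: inner_sum_right inner_commute power2_eq_square mult.assoc)
    also have "\<dots> > 0"
      using lpos v by (intro sum_pos2[OF B(1) v(1)]) (auto simp: less_imp_le)
    finally show ?thesis .
  qed
  ultimately show ?thesis unfolding sym_pos_def_def by (metis matrix_eq)
qed

lemma sym_pos_sylvester_zero:
  fixes S T D :: "real^'n^'n"
  assumes S: "sym_pos_def S" and T: "sym_pos_def T" and symD: "transpose D = D"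
    and eq: "S ** D + D ** T = 0"
  shows "D = 0"
proof -
  obtain B where B: "finite B" "pairwise orthogonal B" "\<forall>v\<in>B. norm v = 1"
      "\<forall>v\<in>B. \<exists>l. D *v v = l *\<^sub>R v" and expand: "\<forall>x. x = (\<Sum>v\<in>B. (x \<bullet> v) *\<^sub>R v)"
    using symmetric_matrix_orthonormal_eigenbasis[OF symD] by blast
  have Dv: "D *v v = 0" if v: "v \<in> B" for v
  proof -
    txt \<open>Pairing \<open>S D v + D T v = 0\<close> with \<open>v\<close> gives \<open>c (v \<bullet> S v + v \<bullet> T v) = 0\<close>
      for the eigenvalue \<open>c\<close> of \<open>v\<close>.\<close>
    obtain c where c: "D *v v = c *\<^sub>R v" using B(4) v by blast
    have "v \<noteq> 0" using B(3) v by auto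
    hence pos: "v \<bullet> (S *v v) + v \<bullet> (T *v v) > 0"
      using S T unfolding sym_pos_def_def by (simp add: add_pos_pos)
    have "0 = v \<bullet> ((S ** D + D ** T) *v v)" using eq by simp
    also have "\<dots> = v \<bullet> (S *v (D *v v)) + (D *v v) \<bullet> (T *v v)"
      by (simp add: matrix_vector_mult_add_rdistrib matrix_vector_mul_assoc[symmetric]
          inner_add_right symmetric_matrix_inner[OF symD])
    also have "\<dots> = c * (v \<bullet> (S *v v) + v \<bullet> (T *v v))"
      by (simp add: c matrix_vector_mult_scaleR algebra_simps)
    finally have "c = 0" using pos by simp
    thus ?thesis using c by simp
  qed
  have "D *v x = 0" for x
    using expand[rule_format, of "D *v x"] Dv symmetric_matrix_inner[OF symD, of x]
    by (metis (no_types, lifting) inner_zero_right scale_zero_left sum.neutral)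
  thus ?thesis by (metis matrix_eq matrix_vector_mult_0)
qed

lemma sym_pos_sqrt_unique:
  fixes S T :: "real^'n^'n"
  assumes S: "sym_pos_def S" and T: "sym_pos_def T" and eq: "S ** S = T ** T"
  shows "S = T"
proof -
  have "transpose (S - T) = S - T"
    using S T unfolding sym_pos_def_def transpose_def by (simp add: vec_eq_iff)
  moreover have "(S ** (S - T) + (S - T) ** T) *v x = 0 *v x" for x
    using arg_cong[OF eq, of "\<lambda>M. M *v x"]
    by (simp add: matrix_vector_mult_add_rdistrib matrix_vector_mult_diff_distrib
        matrix_vector_mult_diff_rdistrib matrix_vector_mul_assoc[symmetric])
  hence "S ** (S - T) + (S - T) ** T = 0" by (rule matrix_eq[THEN iffD2, rule_format])
  ultimately have "S - T = 0" by (rule sym_pos_sylvester_zero[OF S T])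
  thus ?thesis by simp
qed

lemma msqrt_spec:
  fixes A :: "real^'n^'n"
  assumes "sym_pos_def A"
  shows "sym_pos_def (msqrt A) \<and> msqrt A ** msqrt A = A"
  unfolding msqrt_def
  by (rule theI') (metis sym_pos_sqrt_exists[OF assms] sym_pos_sqrt_unique)

lemma sym_pos_invertible:
  fixes A :: "real^'n^'n"
  assumes "sym_pos_def A"
  shows "invertible A"
proof -
  have "inj ((*v) A)"
  proof (rule injI)
    fix x y assume "A *v x = A *v y"
    hence "A *v (x - y) = 0" by (simp add: matrix_vector_mult_diff_distrib)
    thus "x = y" using assms unfolding sym_pos_def_def
      by (metis inner_zero_right less_irrefl right_minus_eq)
  qed
  thus ?thesis using matrix_left_invertible_injective invertible_left_inverse by blast
qed

lemma invertible_matrix_inv: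
  fixes A :: "real^'n^'n"
  assumes "invertible A"
  shows "A ** matrix_inv A = mat 1" "matrix_inv A ** A = mat 1"
proof -
  have "A ** matrix_inv A = mat 1 \<and> matrix_inv A ** A = mat 1"
    unfolding matrix_inv_def using assms[unfolded invertible_def] by (rule someI_ex)
  thus "A ** matrix_inv A = mat 1" "matrix_inv A ** A = mat 1" by auto
qed

lemma ellipsoid0_eq_msqrt_image:
  fixes Q :: "real^'n^'n"
  assumes Q: "sym_pos_def Q"
  shows "ellipsoid0 Q = (\<lambda>u. msqrt Q *v u) ` cball 0 1"
proof -
  define R where "R = msqrt Q"
  have R: "sym_pos_def R" "R ** R = Q" using msqrt_spec[OF Q] unfolding R_def by auto
  define Ri where "Ri = matrix_inv R"
  have RRi: "R *v (Ri *v u) = u" for u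
    using invertible_matrix_inv(1)[OF sym_pos_invertible[OF R(1)]]
    unfolding Ri_def by (simp add: matrix_vector_mul_assoc)
  have quad: "(R *v u) \<bullet> (matrix_inv Q *v (R *v u)) = (norm u)\<^sup>2" for u
  proof -
    have "Q *v (Ri *v u) = R *v u" using RRi R(2) by (metis matrix_vector_mul_assoc)
    hence "matrix_inv Q *v (R *v u) = Ri *v u"
      using invertible_matrix_inv(2)[OF sym_pos_invertible[OF Q]]
      by (metis matrix_vector_mul_assoc matrix_vector_mul_lid)
    hence "(R *v u) \<bullet> (matrix_inv Q *v (R *v u)) = u \<bullet> (R *v (Ri *v u))"
      using R(1) symmetric_matrix_inner unfolding sym_pos_def_def by metis
    thus ?thesis by (simp add: RRi power2_norm_eq_inner)
  qed
  have "y \<in> ellipsoid0 Q \<longleftrightarrow> y \<in> (\<lambda>u. R *v u) ` cball 0 1" for y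
  proof
    assume "y \<in> ellipsoid0 Q"
    hence "Ri *v y \<in> cball 0 1"
      using quad[of "Ri *v y"] unfolding RRi ellipsoid0_def by (simp add: power_le_one_iff)
    thus "y \<in> (\<lambda>u. R *v u) ` cball 0 1" using RRi[of y] by (metis image_eqI)
  qed (use quad in \<open>auto simp: ellipsoid0_def power_le_one\<close>)
  thus ?thesis unfolding R_def by blast
qed

lemma matrix_sum_vector_mult:
  fixes M :: "'k \<Rightarrow> real^'n^'m"
  shows "(\<Sum>k\<in>K. M k) *v u = (\<Sum>k\<in>K. M k *v u)"
  by (induction K rule: infinite_finite_induct) (auto simp: matrix_vector_mult_add_rdistrib)

lemma sum_msqrt_mult_mem_ellipsoid_msum:
  fixes M :: "nat \<Rightarrow> real^'n^'n"
  assumes "\<And>k. k \<le> t \<Longrightarrow> sym_pos_def (M k)" and "norm u \<le> 1"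
  shows "(\<Sum>k\<le>t. msqrt (M k)) *v u \<in> ellipsoid_msum M t"
proof -
  have "msqrt (M k) *v u \<in> ellipsoid0 (M k)" if "k \<le> t" for k
    using assms ellipsoid0_eq_msqrt_image[OF assms(1)[OF that]] by auto
  thus ?thesis unfolding ellipsoid_msum_def matrix_sum_vector_mult by blast
qed

lemma spec_norm_nonneg: "0 \<le> spec_norm (A :: real^'n^'m)"
  unfolding spec_norm_def by (rule onorm_pos_le) simp

lemma norm_matrix_vector_le_spec_norm: "norm (A *v x) \<le> spec_norm A * norm x"
  unfolding spec_norm_def by (rule onorm) simp

lemma hausdorff_dist_le_of_subset:
  fixes X Y :: "'a::metric_space set"
  assumes "X \<subseteq> Y" "X \<noteq> {}" "0 \<le> d" and near: "\<And>y. y \<in> Y \<Longrightarrow> \<exists>x\<in>X. dist y x \<le> d"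
  shows "hausdorff_dist X Y \<le> d"
proof -
  have "(SUP x\<in>X. infdist x Y) \<le> d" using assms(1-3) by (intro cSUP_least) auto
  moreover have "(SUP y\<in>Y. infdist y X) \<le> d"
  proof (rule cSUP_least)
    show "Y \<noteq> {}" using assms(1,2) by blast
  next
    fix y assume "y \<in> Y"
    then obtain x where "x \<in> X" "dist y x \<le> d" using near by blast
    thus "infdist y X \<le> d" by (meson infdist_le order_trans)
  qed
  ultimately show ?thesis unfolding hausdorff_dist_def by simp
qed

theorem proposition1:
  fixes M :: "nat \<Rightarrow> real^'n^'n" and Qh :: "real^'n^'n" and t :: nat
  assumes "\<And>k. k \<le> t \<Longrightarrow> sym_pos_def (M k)"
    and "sym_pos_def Qh"
    and "ellipsoid_msum M t \<subseteq> ellipsoid0 Qh"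
  shows "hausdorff_dist (ellipsoid_msum M t) (ellipsoid0 Qh)
           \<le> spec_norm (msqrt Qh - (\<Sum>k\<le>t. msqrt (M k)))"
proof (rule hausdorff_dist_le_of_subset[OF assms(3) _ spec_norm_nonneg])
  let ?S = "\<Sum>k\<le>t. msqrt (M k)"
  have "0 \<in> ellipsoid_msum M t"
    using sum_msqrt_mult_mem_ellipsoid_msum[where M = M and t = t and u = 0] assms(1) by simp
  thus "ellipsoid_msum M t \<noteq> {}" by blast
  fix y assume "y \<in> ellipsoid0 Qh"
  then obtain u where u: "norm u \<le> 1" "y = msqrt Qh *v u"
    using ellipsoid0_eq_msqrt_image[OF assms(2)] by auto
  have "dist y (?S *v u) = norm ((msqrt Qh - ?S) *v u)"
    by (simp add: u dist_norm matrix_vector_mult_diff_rdistrib)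
  also have "\<dots> \<le> spec_norm (msqrt Qh - ?S) * norm u"
    by (rule norm_matrix_vector_le_spec_norm)
  also have "\<dots> \<le> spec_norm (msqrt Qh - ?S)"
    by (rule mult_left_le[OF u(1) spec_norm_nonneg])
  finally show "\<exists>x\<in>ellipsoid_msum M t. dist y x \<le> spec_norm (msqrt Qh - ?S)"
    using sum_msqrt_mult_mem_ellipsoid_msum[where M = M and t = t] assms(1) u(1) by blast
qed

end
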